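(* Let $\Sigma$ be a two-letter alphabet, $\Gamma$ a finite alphabet, $h:\Sigma^*\to\Gamma^*$ an injective morphism and $w\in\Sigma^{\mathbb{N}}$ an infinite word. If there exist factors $f_1,f_2,f_3,\dots$ of $h(w)$ that are not synchronizing words of $h(\Sigma)$ and satisfy $\lim_{i\to\infty}|f_i| = \infty$, then $\mathrm{ACE}(h(w)) = \mathrm{ACE}(w) = \infty$.
   Context: For a finite set $X$ of finite words, a word $w$ is a synchronizing word of $X$ if $w = w_1w_2$ for some words $w_1,w_2$ such that for every $v\in X^*$ of the form $v = pws$, we have $pw_1\in X^*$ and $w_2s\in X^*$. $\mathrm{Fact}_n(w)$ is the set of length-$n$ factors of $w$. For a nonempty word $v$ and integer $p\ge0$, $v^{p/|v|}$ is the prefix of length $p$ of $vvv\cdots$. For a nonempty finite word $x$, $\mathrm{E}(x) = \sup\{ r \in \mathbb{Q} : x = v^r \text{ for some nonempty } v\}$. For an infinite word $w$, $\mathrm{ACE}(w) = \limsup_{n\to\infty}\sup\{\mathrm{E}(x) : x\in\mathrm{Fact}_n(w)\}$. *)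

theory Defs
  imports Complex_Main "HOL-Library.Extended_Real" "HOL-Library.Liminf_Limsup"
begin

definition wstar :: "'a list set \<Rightarrow> 'a list set" where
  "wstar X = {concat us | us. set us \<subseteq> X}"

definition morph :: "('a \<Rightarrow> 'b list) \<Rightarrow> 'a list \<Rightarrow> 'b list" where
  "morph h u = concat (map h u)"

text \<open>Image of an infinite word under a (non-erasing) morphism: the n-th letter
  of h(w) is the n-th letter of h(w_0 ... w_n).\<close>
definition morph_inf :: "('a \<Rightarrow> 'b list) \<Rightarrow> (nat \<Rightarrow> 'a) \<Rightarrow> nat \<Rightarrow> 'b" where
  "morph_inf h w n = morph h (map w [0..<Suc n]) ! n"

definition sync_word :: "'a list set \<Rightarrow> 'a list \<Rightarrow> bool" where
  "sync_word X u \<longleftrightarrow> (\<exists>w1 w2. u = w1 @ w2 \<and>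
     (\<forall>v p s. v \<in> wstar X \<and> v = p @ u @ s \<longrightarrow> p @ w1 \<in> wstar X \<and> w2 @ s \<in> wstar X))"

definition Fact :: "nat \<Rightarrow> (nat \<Rightarrow> 'a) \<Rightarrow> 'a list set" where
  "Fact n x = {map x [i..<i+n] | i. True}"

definition is_factor :: "'a list \<Rightarrow> (nat \<Rightarrow> 'a) \<Rightarrow> bool" where
  "is_factor u x \<longleftrightarrow> (\<exists>i. u = map x [i..<i + length u])"

definition is_power :: "'a list \<Rightarrow> 'a list \<Rightarrow> rat \<Rightarrow> bool" where
  "is_power x v r \<longleftrightarrow> v \<noteq> [] \<and> of_rat r * real (length v) = real (length x) \<and>
     (\<forall>i < length x. x ! i = v ! (i mod length v))"

definition Exp :: "'a list \<Rightarrow> ereal" where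
  "Exp x = Sup {ereal (of_rat r) | r. \<exists>v. is_power x v r}"

definition ACE :: "(nat \<Rightarrow> 'a) \<Rightarrow> ereal" where
  "ACE w = limsup (\<lambda>n. Sup (Exp ` Fact n w))"

end

theory Submission
  imports Defs "HOL-Library.Sublist" "HOL-Library.Cardinality"
begin

(* Since h is injective on a two-letter alphabet, h(a)h(b) <> h(b)h(a), so the periodic words
   h(a)^omega and h(b)^omega first differ at some position m; hence the images of two words with
   different first letters agree on exactly their first m symbols.  This makes parsings rigid: if
   two cuts of a parsing of some text fall at the same offset inside the same letter of a second
   parsing that shares no cut with the first, then the first parsing reads the same letters after
   both cuts, for as long as the text allows.
   A long non-synchronizing factor, split at a cut near its middle, has a half that is parsed in two
   ways without a common cut.  Among CARD('a) * M + 1 consecutive cuts of the first parsing (M the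
   maximal length of a code word) two are in the same state with respect to the second one, so w
   has arbitrarily long factors of period at most CARD('a) * M, and h(w) ones of period at most
   M * CARD('a) * M.  Hence the exponents of the factors of any large length are unbounded in both
   words. *)

lemma morph_Nil [simp]: "morph h [] = []"
  and morph_Cons [simp]: "morph h (a # xs) = h a @ morph h xs"
  and morph_append [simp]: "morph h (xs @ ys) = morph h xs @ morph h ys"
  by (simp_all add: morph_def)

lemma morph_prefix: "prefix x y \<Longrightarrow> prefix (morph h x) (morph h y)"
  by (auto elim!: prefixE)

lemma length_morph_prefix: "prefix x y \<Longrightarrow> length (morph h x) \<le> length (morph h y)"
  by (auto elim!: prefixE)

lemma length_morph_ge: "(\<And>a. h a \<noteq> []) \<Longrightarrow> length xs \<le> length (morph h xs)"
proof (induction xs)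
  case (Cons a xs)
  then show ?case by (cases "h a") auto
qed simp

lemma length_morph_le: "(\<And>a. length (h a) \<le> M) \<Longrightarrow> length (morph h xs) \<le> M * length xs"
  by (induction xs) (auto simp: add_mono)

lemma length_morph_take_mono:
  assumes "j \<le> j'"
  shows "length (morph h (take j \<zeta>)) \<le> length (morph h (take j' \<zeta>))"
proof -
  have "prefix (take j \<zeta>) (take j' \<zeta>)"
    using assms take_is_prefix[of j "take j' \<zeta>"] by simp
  then show ?thesis
    by (rule length_morph_prefix)
qed

lemma inj_morph_nonerasing: "inj (morph h) \<Longrightarrow> h a \<noteq> []"
  using injD[of "morph h" "[a]" "[]"] by auto

lemma prefix_by_length_morph:
  assumes "\<And>a. h a \<noteq> []" "prefix x \<zeta>" "prefix x' \<zeta>" "length (morph h x) \<le> length (morph h x')"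
  shows "prefix x x'"
proof (rule ccontr)
  assume "\<not> prefix x x'"
  then have "prefix x' x"
    using prefix_same_cases[OF assms(2,3)] by blast
  then obtain r where "x = x' @ r" "r \<noteq> []"
    using \<open>\<not> prefix x x'\<close> by (auto elim!: prefixE)
  then obtain c z where "x = x' @ c # z"
    by (cases r) auto
  then show False
    using assms(1)[of c] assms(4) by simp
qed

lemma morph_prefix_take: "prefix x \<zeta> \<Longrightarrow> morph h x = take (length (morph h x)) (morph h \<zeta>)"
  by (auto elim!: prefixE)

lemma wstar_range: "wstar (range h) = range (morph h)"
proof -
  have "set us \<subseteq> range h \<longleftrightarrow> (\<exists>xs. us = map h xs)" for us
    by (auto simp: ex_map_conv)
  then show ?thesis
    by (auto simp: wstar_def morph_def)
qed

abbreviation lcp :: "'a list \<Rightarrow> 'a list \<Rightarrow> 'a list" where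
  "lcp \<equiv> longest_common_prefix"

lemma prefix_nth: "prefix xs ys \<Longrightarrow> i < length xs \<Longrightarrow> ys ! i = xs ! i"
  by (auto simp: prefix_def nth_append)

lemma lcp_append_same: "lcp (xs @ ys) (xs @ zs) = xs @ lcp ys zs"
  by (induction xs) auto

lemma lcp_take: "lcp (take n xs) (take n ys) = take n (lcp xs ys)"
  by (induction xs ys arbitrary: n rule: longest_common_prefix.induct) (auto simp: take_Cons split: nat.split)

lemma lcp_prefix_left: "prefix xs ys \<Longrightarrow> lcp xs ys = xs"
  by (metis longest_common_prefix_max_prefix longest_common_prefix_prefix1 prefix_order.antisym prefix_order.refl)

lemma lcp_prefix_right: "prefix ys xs \<Longrightarrow> lcp xs ys = ys"
  by (metis longest_common_prefix_max_prefix longest_common_prefix_prefix2 prefix_order.antisym prefix_order.refl)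

lemma length_lcp_eqI:
  assumes "k \<le> length xs" "k \<le> length ys" "take k xs = take k ys"
    and "k < length xs \<Longrightarrow> k < length ys \<Longrightarrow> xs ! k \<noteq> ys ! k"
  shows "length (lcp xs ys) = k"
proof (rule antisym)
  have "prefix (take k xs) (lcp xs ys)"
    using assms(3) by (metis longest_common_prefix_max_prefix take_is_prefix)
  then show "k \<le> length (lcp xs ys)"
    using assms(1) prefix_length_le by fastforce
  show "length (lcp xs ys) \<le> k"
  proof (rule ccontr)
    assume long: "\<not> length (lcp xs ys) \<le> k"
    then have "xs ! k = lcp xs ys ! k" "ys ! k = lcp xs ys ! k"
      using prefix_nth[OF longest_common_prefix_prefix1[of xs ys], of k]
        prefix_nth[OF longest_common_prefix_prefix2[of xs ys], of k] by simp_all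
    moreover have "k < length xs" "k < length ys"
      using long prefix_length_le[OF longest_common_prefix_prefix1[of xs ys]]
        prefix_length_le[OF longest_common_prefix_prefix2[of xs ys]] by linarith+
    ultimately show False
      using assms(4) by simp
  qed
qed

lemma length_lcp_take_cong:
  assumes "take L xs = take L xs'" "take L ys = take L ys'" "length (lcp xs ys) < L"
  shows "length (lcp xs' ys') = length (lcp xs ys)"
  using arg_cong[OF lcp_take[of L xs ys], of length] arg_cong[OF lcp_take[of L xs' ys'], of length] assms
  by auto

lemma parallel_if_prefix_not_prefix:
  assumes "prefix \<gamma> xs" "\<not> prefix \<gamma> ys" "\<not> prefix ys \<gamma>"
  shows "xs \<parallel> ys" "prefix (lcp xs ys) \<gamma>"
proof -
  show "xs \<parallel> ys"
    using assms prefix_order.trans prefix_same_cases by blast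
  show "prefix (lcp xs ys) \<gamma>"
    using prefix_same_cases[OF longest_common_prefix_prefix1 assms(1)] assms(2)
      longest_common_prefix_prefix2 prefix_order.trans by blast
qed

lemma lcp_morph_comparable:
  assumes "\<not> x \<parallel> y"
  shows "length (lcp (morph h x) (morph h y)) = min (length (morph h x)) (length (morph h y))"
proof (cases "prefix x y")
  case True
  then show ?thesis
    using lcp_prefix_left prefix_length_le morph_prefix by (metis min.absorb1)
next
  case False
  then have "prefix y x"
    using assms by (auto simp: parallel_def)
  then show ?thesis
    using lcp_prefix_right prefix_length_le morph_prefix by (metis min.absorb2)
qed

section \<open>Binary codes have a bounded deciphering delay\<close>

definition letter_omega :: "('a \<Rightarrow> 'b list) \<Rightarrow> 'a \<Rightarrow> nat \<Rightarrow> 'b" where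
  "letter_omega h c i = h c ! (i mod length (h c))"

lemma morph_Cons_nth_omega:
  assumes ne: "\<And>a. h a \<noteq> []" and agree: "\<And>c d i. i < m \<Longrightarrow> letter_omega h c i = letter_omega h d i"
  shows "t \<le> m \<Longrightarrow> t < length (morph h (c # x)) \<Longrightarrow> morph h (c # x) ! t = letter_omega h c t"
proof (induction x arbitrary: c t)
  case Nil
  then show ?case by (simp add: letter_omega_def)
next
  case (Cons e x)
  show ?case
  proof (cases "t < length (h c)")
    case True
    then show ?thesis by (simp add: nth_append letter_omega_def)
  next
    case False
    define t' where "t' = t - length (h c)"
    have "0 < length (h c)"
      using ne[of c] by simp
    then have t: "t = t' + length (h c)" and "t' < m"
      using False Cons.prems(1) unfolding t'_def by arith+
    have "morph h (c # e # x) ! t = morph h (e # x) ! t'"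
      using t by (simp add: nth_append)
    also have "\<dots> = letter_omega h e t'"
      using Cons.IH[of t' e] Cons.prems t \<open>t' < m\<close> by simp
    also have "\<dots> = letter_omega h c t"
      using agree[OF \<open>t' < m\<close>, of e c] t by (simp add: letter_omega_def)
    finally show ?thesis .
  qed
qed

lemma delay_from_letter_omega:
  assumes ne: "\<And>a. h a \<noteq> []"
    and agree: "\<And>c d i. i < m \<Longrightarrow> letter_omega h c i = letter_omega h d i"
    and differ: "\<And>c d. c \<noteq> d \<Longrightarrow> letter_omega h c m \<noteq> letter_omega h d m"
    and "c \<noteq> d"
  shows "length (lcp (morph h (c # x)) (morph h (d # y))) =
    min m (min (length (morph h (c # x))) (length (morph h (d # y))))"
    (is "_ = ?k")
proof (rule length_lcp_eqI)
  note omega = morph_Cons_nth_omega[OF ne agree]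
  show "take ?k (morph h (c # x)) = take ?k (morph h (d # y))"
  proof (rule nth_equalityI)
    fix t
    assume "t < length (take ?k (morph h (c # x)))"
    then have "t < ?k"
      by (simp del: morph_Cons)
    then show "take ?k (morph h (c # x)) ! t = take ?k (morph h (d # y)) ! t"
      using omega[where t = t and c = c and x = x] omega[where t = t and c = d and x = y] agree[of t c d]
      by (simp del: morph_Cons)
  qed (simp del: morph_Cons)
  show "morph h (c # x) ! ?k \<noteq> morph h (d # y) ! ?k"
    if "?k < length (morph h (c # x))" "?k < length (morph h (d # y))"
    using that omega differ[OF \<open>c \<noteq> d\<close>] by (simp add: min_def split: if_splits)
qed simp_all

lemma binary_letter_omega_differ:
  assumes inj: "inj (morph h)" and ab: "UNIV = {a, b}" "a \<noteq> b"
  shows "\<exists>i. letter_omega h a i \<noteq> letter_omega h b i"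
proof (rule ccontr)
  assume same: "\<nexists>i. letter_omega h a i \<noteq> letter_omega h b i"
  have letters: "c = a \<or> c = b" for c
    using UNIV_I[of c] unfolding ab(1) by blast
  have omega_eq: "letter_omega h c i = letter_omega h d i" for c d i
    using same letters[of c] letters[of d] by auto
  have nth_omega: "morph h (c # x) ! t = letter_omega h c t" if "t < length (morph h (c # x))" for c x t
    using morph_Cons_nth_omega[OF inj_morph_nonerasing[OF inj] omega_eq le_refl that] .
  have "morph h [a, b] = morph h [b, a]"
  proof (rule nth_equalityI)
    fix t
    assume "t < length (morph h [a, b])"
    then show "morph h [a, b] ! t = morph h [b, a] ! t"
      using nth_omega[of t a "[b]"] nth_omega[of t b "[a]"] omega_eq[of a t b] by simp
  qed simp
  then have "[a, b] = [b, a]"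
    by (rule injD[OF inj])
  then show False
    using ab(2) by simp
qed

lemma binary_code_delay:
  fixes h :: "'a \<Rightarrow> 'b list"
  assumes card: "card (UNIV :: 'a set) = 2" and inj: "inj (morph h)"
  obtains m where "\<And>c d x y. c \<noteq> d \<Longrightarrow>
    length (lcp (morph h (c # x)) (morph h (d # y))) =
      min m (min (length (morph h (c # x))) (length (morph h (d # y))))"
proof -
  obtain a b :: 'a where ab: "UNIV = {a, b}" "a \<noteq> b"
    using card unfolding card_2_iff by blast
  have letters: "c = a \<or> c = b" for c
    using UNIV_I[of c] unfolding ab(1) by blast
  define m where "m = (LEAST i. letter_omega h a i \<noteq> letter_omega h b i)"
  have agree: "letter_omega h c i = letter_omega h d i" if "i < m" for c d i
    using not_less_Least[OF that[unfolded m_def]] letters[of c] letters[of d] by auto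
  have differ: "letter_omega h c m \<noteq> letter_omega h d m" if "c \<noteq> d" for c d
    using LeastI_ex[OF binary_letter_omega_differ[OF inj ab]] that letters[of c] letters[of d]
    unfolding m_def by auto
  show thesis
    using delay_from_letter_omega[OF inj_morph_nonerasing[OF inj] agree differ] by (rule that)
qed

section \<open>Cuts of parsings\<close>

definition cuts :: "('a \<Rightarrow> 'b list) \<Rightarrow> 'a list \<Rightarrow> nat set" where
  "cuts h \<zeta> = {length (morph h x) | x. prefix x \<zeta>}"

lemma in_cutsI: "prefix x \<zeta> \<Longrightarrow> length (morph h x) = n \<Longrightarrow> n \<in> cuts h \<zeta>"
  by (auto simp: cuts_def)

lemma in_cutsE:
  assumes "n \<in> cuts h \<zeta>"
  obtains x where "prefix x \<zeta>" "length (morph h x) = n"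
  using assms by (auto simp: cuts_def)

lemma zero_in_cuts [simp]: "0 \<in> cuts h \<zeta>"
  by (auto simp: cuts_def intro!: exI[of _ "[]"])

lemma cuts_Cons: "cuts h (c # \<zeta>) = insert 0 ((+) (length (h c)) ` cuts h \<zeta>)"
  unfolding cuts_def prefix_Cons by (auto intro: exI[of _ "[]"]) (metis length_append morph_Cons)

lemma cut_splits:
  assumes "n \<in> cuts h \<zeta>"
  shows "take n (morph h \<zeta>) \<in> range (morph h)" "drop n (morph h \<zeta>) \<in> range (morph h)"
  using assms by (auto simp: cuts_def elim!: prefixE)

lemma morph_prefix_in_occurrence:
  assumes "p @ u @ s = morph h \<zeta>" "prefix x \<zeta>" "length (morph h x) = length p + t" "t \<le> length u"
  shows "morph h x = p @ take t u"
proof -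
  have "morph h x = take (length p + t) (morph h \<zeta>)"
    using morph_prefix_take[OF assms(2), of h] assms(3) by simp
  then show ?thesis
    using assms(4) by (simp flip: assms(1))
qed

lemma occurrence_suffix_at_cut:
  assumes "p @ u @ s = morph h \<zeta>" "x @ z = \<zeta>" "length (morph h x) = length p + t" "t \<le> length u"
  shows "morph h z = drop t u @ s"
proof -
  have "morph h z = drop (length p + t) (morph h \<zeta>)"
    using assms(2,3) by auto
  then show ?thesis
    using assms(4) by (simp flip: assms(1))
qed

lemma not_sync_word_occurrence:
  assumes "\<not> sync_word (range h) u" "c \<le> length u"
  obtains p s \<eta> where "p @ u @ s = morph h \<eta>" "length p + c \<notin> cuts h \<eta>"
proof -
  have "\<not> (\<forall>v p s. v \<in> range (morph h) \<and> v = p @ u @ s \<longrightarrow>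
      p @ take c u \<in> range (morph h) \<and> drop c u @ s \<in> range (morph h))"
  proof
    assume "\<forall>v p s. v \<in> range (morph h) \<and> v = p @ u @ s \<longrightarrow>
      p @ take c u \<in> range (morph h) \<and> drop c u @ s \<in> range (morph h)"
    then have "sync_word (range h) u"
      unfolding sync_word_def wstar_range by (intro exI[of _ "take c u"] exI[of _ "drop c u"]) simp
    with assms(1) show False
      by contradiction
  qed
  then obtain p s \<eta> where G: "p @ u @ s = morph h \<eta>"
    and bad: "p @ take c u \<notin> range (morph h) \<or> drop c u @ s \<notin> range (morph h)"
    by (metis rangeE)
  have "length p + c \<notin> cuts h \<eta>"
  proof
    assume "length p + c \<in> cuts h \<eta>"
    from cut_splits[OF this] show False
      using bad assms(2) by (simp flip: G)
  qed
  with G show thesis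
    by (rule that)
qed

definition inside_letter :: "('a \<Rightarrow> 'b list) \<Rightarrow> 'a list \<Rightarrow> nat \<Rightarrow> 'a \<times> nat \<Rightarrow> bool" where
  "inside_letter h \<eta> n cd \<longleftrightarrow> (\<exists>y z. \<eta> = y @ fst cd # z \<and> length (morph h y) + snd cd = n \<and>
     0 < snd cd \<and> snd cd < length (h (fst cd)))"

lemma non_cut_inside_letter:
  "n < length (morph h \<eta>) \<Longrightarrow> n \<notin> cuts h \<eta> \<Longrightarrow> \<exists>cd. inside_letter h \<eta> n cd"
proof (induction \<eta> arbitrary: n)
  case (Cons c \<eta>)
  show ?case
  proof (cases "n < length (h c)")
    case True
    moreover have "n \<noteq> 0"
      using Cons.prems(2) by (auto simp: cuts_Cons)
    ultimately have "inside_letter h (c # \<eta>) n (c, n)"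
      unfolding inside_letter_def by (intro exI[of _ "[]"] exI[of _ \<eta>]) simp
    then show ?thesis ..
  next
    case False
    then have "n - length (h c) \<notin> cuts h \<eta>" "n \<noteq> length (h c)"
      using Cons.prems(2) by (auto simp: cuts_Cons image_iff)
    moreover have "n - length (h c) < length (morph h \<eta>)"
      using Cons.prems(1) False by simp
    ultimately obtain cd y z where "\<eta> = y @ fst cd # z" "length (morph h y) + snd cd = n - length (h c)"
      "0 < snd cd" "snd cd < length (h (fst cd))"
      using Cons.IH unfolding inside_letter_def by blast
    then have "inside_letter h (c # \<eta>) n cd"
      unfolding inside_letter_def using False by (intro exI[of _ "c # y"] exI[of _ z]) auto
    then show ?thesis ..
  qed
qed simp

lemma occurrence_suffix_in_letter:
  assumes "p @ u @ s = morph h \<eta>" "\<eta> = y @ c # z" "length (morph h y) + d = length p + t"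
    "t \<le> length u" "d \<le> length (h c)"
  shows "drop t u @ s = drop d (h c) @ morph h z"
proof -
  have "drop (length p + t) (morph h \<eta>) = drop d (h c) @ morph h z"
    unfolding assms(2) using assms(5) by (simp flip: assms(3))
  then show ?thesis
    using assms(4) by (simp flip: assms(1))
qed

text \<open>Here \<open>i\<close> and \<open>j\<close> are the positions of two occurrences of the same word of length \<open>n\<close>
  in \<open>morph h \<zeta>\<close> and \<open>morph h \<eta>\<close>.\<close>

definition no_common_cut :: "('a \<Rightarrow> 'b list) \<Rightarrow> 'a list \<Rightarrow> nat \<Rightarrow> 'a list \<Rightarrow> nat \<Rightarrow> nat \<Rightarrow> bool" where
  "no_common_cut h \<zeta> i \<eta> j n \<longleftrightarrow> (\<forall>t \<le> n. i + t \<in> cuts h \<zeta> \<longrightarrow> j + t \<notin> cuts h \<eta>)"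

lemma no_common_cut_inside_letter:
  assumes G: "p2 @ u @ s2 = morph h \<eta>"
    and disjoint: "no_common_cut h \<zeta> (length p1) \<eta> (length p2) (length u)"
    and "length p1 + t \<in> cuts h \<zeta>" "t < length u"
  shows "\<exists>cd. inside_letter h \<eta> (length p2 + t) cd"
proof (rule non_cut_inside_letter)
  show "length p2 + t < length (morph h \<eta>)"
    using assms(4) by (simp flip: G)
  show "length p2 + t \<notin> cuts h \<eta>"
    using disjoint assms(3,4) unfolding no_common_cut_def by simp
qed

lemma common_cuts_propagate:
  assumes inj: "inj (morph h)"
    and F: "p1 @ u @ s1 = morph h \<zeta>" and G: "p2 @ u @ s2 = morph h \<eta>"
    and a: "length p1 + a \<in> cuts h \<zeta>" "length p2 + a \<in> cuts h \<eta>"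
    and b: "length p1 + b \<in> cuts h \<zeta>" "length p2 + b \<in> cuts h \<eta>"
    and c: "length p1 + c \<in> cuts h \<zeta>" "a \<le> c" "c \<le> b" "b \<le> length u"
  shows "length p2 + c \<in> cuts h \<eta>"
proof -
  have ne: "\<And>a. h a \<noteq> []"
    using inj_morph_nonerasing[OF inj] .
  obtain xa where xa: "prefix xa \<zeta>" "length (morph h xa) = length p1 + a"
    using a(1) by (rule in_cutsE) simp
  obtain xb where xb: "prefix xb \<zeta>" "length (morph h xb) = length p1 + b"
    using b(1) by (rule in_cutsE) simp
  obtain xc where xc: "prefix xc \<zeta>" "length (morph h xc) = length p1 + c"
    using c(1) by (rule in_cutsE) simp
  obtain ya where ya: "prefix ya \<eta>" "length (morph h ya) = length p2 + a"
    using a(2) by (rule in_cutsE) simp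
  obtain yb where yb: "prefix yb \<eta>" "length (morph h yb) = length p2 + b"
    using b(2) by (rule in_cutsE) simp
  have "prefix xa xc"
    using prefix_by_length_morph[of h, OF ne xa(1) xc(1)] xa(2) xc(2) c(2) by simp
  moreover have "prefix xc xb"
    using prefix_by_length_morph[of h, OF ne xc(1) xb(1)] xc(2) xb(2) c(3) by simp
  moreover have "prefix ya yb"
    using prefix_by_length_morph[of h, OF ne ya(1) yb(1)] ya(2) yb(2) c(2,3) by simp
  ultimately obtain \<tau> \<sigma>1 \<sigma>2 where \<tau>: "xc = xa @ \<tau>" and \<sigma>1: "xb = xa @ \<sigma>1" and \<sigma>2: "yb = ya @ \<sigma>2"
    using prefix_order.trans by (meson prefixE)
  have "take a u @ morph h \<sigma>1 = take b u"
    using morph_prefix_in_occurrence[OF F xa] morph_prefix_in_occurrence[OF F xb] \<sigma>1 c by simp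
  moreover have "take a u @ morph h \<sigma>2 = take b u"
    using morph_prefix_in_occurrence[OF G ya] morph_prefix_in_occurrence[OF G yb] \<sigma>2 c by simp
  ultimately have "morph h \<sigma>1 = morph h \<sigma>2"
    by (metis same_append_eq)
  then have "\<sigma>1 = \<sigma>2"
    by (rule injD[OF inj])
  moreover have "prefix \<tau> \<sigma>1"
    using \<open>prefix xc xb\<close> \<tau> \<sigma>1 by simp
  ultimately have "prefix (ya @ \<tau>) yb"
    using \<sigma>2 by simp
  then have "prefix (ya @ \<tau>) \<eta>"
    using yb(1) by (rule prefix_order.trans)
  moreover have "length (morph h (ya @ \<tau>)) = length p2 + c"
    using \<tau> xa(2) xc(2) ya(2) c(2) by simp
  ultimately show ?thesis
    by (rule in_cutsI)
qed

lemma no_common_cut_after: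
  assumes inj: "inj (morph h)"
    and F: "p1 @ u @ s1 = morph h \<zeta>" and G: "p2 @ u @ s2 = morph h \<eta>"
    and a: "a \<le> c" "length p1 + a \<in> cuts h \<zeta>" "length p2 + a \<in> cuts h \<eta>"
    and c: "length p1 + c \<in> cuts h \<zeta>" "length p2 + c \<notin> cuts h \<eta>" "c \<le> length u"
  shows "no_common_cut h \<zeta> (length p1 + c) \<eta> (length p2 + c) (length u - c)"
  unfolding no_common_cut_def
proof (intro allI impI notI)
  fix t
  assume "t \<le> length u - c" "length p1 + c + t \<in> cuts h \<zeta>" "length p2 + c + t \<in> cuts h \<eta>"
  then have "c + t \<le> length u" "length p1 + (c + t) \<in> cuts h \<zeta>" "length p2 + (c + t) \<in> cuts h \<eta>"
    using c(3) by (simp_all add: add.assoc)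
  then show False
    using common_cuts_propagate[OF inj F G a(2,3) _ _ c(1) a(1)] c(2) le_add1 by blast
qed

lemma pigeonhole_window:
  assumes "finite B" "f ` {a..a + card B} \<subseteq> B"
  obtains j j' where "a \<le> j" "j < j'" "j' \<le> a + card B" "f j = f j'"
proof -
  have "card (f ` {a..a + card B}) < card {a..a + card B}"
    using card_mono[OF assms] by simp
  then have "\<not> inj_on f {a..a + card B}"
    by (rule pigeonhole)
  then obtain j j' where "j \<in> {a..a + card B}" "j' \<in> {a..a + card B}" "j \<noteq> j'" "f j = f j'"
    unfolding inj_on_def by blast
  then show thesis
    using that[of j j'] that[of j' j] by (cases "j < j'") auto
qed

section \<open>Repetitions and the asymptotic critical exponent\<close>

lemma prefix_map_upt: "n \<le> n' \<Longrightarrow> prefix (map w [0..<n]) (map w [0..<n'])"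
  using upt_add_eq_append[of 0 n "n' - n"] by (auto intro: prefixI)

lemma morph_inf_nth:
  assumes ne: "\<And>a. h a \<noteq> []" and t: "t < length (morph h (map w [0..<n]))"
  shows "morph_inf h w t = morph h (map w [0..<n]) ! t"
proof -
  let ?N = "max n (Suc t)"
  have p1: "prefix (morph h (map w [0..<Suc t])) (morph h (map w [0..<?N]))"
    by (intro morph_prefix prefix_map_upt) simp
  have p2: "prefix (morph h (map w [0..<n])) (morph h (map w [0..<?N]))"
    by (intro morph_prefix prefix_map_upt) simp
  have "t < length (morph h (map w [0..<Suc t]))"
    using length_morph_ge[where h = h, OF ne, of "map w [0..<Suc t]"] by simp
  have "morph_inf h w t = morph h (map w [0..<Suc t]) ! t"
    unfolding morph_inf_def ..
  also have "\<dots> = morph h (map w [0..<?N]) ! t"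
    using prefix_nth[OF p1 \<open>t < length (morph h (map w [0..<Suc t]))\<close>] by (rule sym)
  also have "\<dots> = morph h (map w [0..<n]) ! t"
    using prefix_nth[OF p2 t] .
  finally show ?thesis .
qed

lemma factor_in_prefix_image:
  assumes ne: "\<And>a. h a \<noteq> []" and u: "is_factor u (morph_inf h w)"
  obtains n p s where "p @ u @ s = morph h (map w [0..<n])"
proof -
  obtain a where a: "u = map (morph_inf h w) [a..<a + length u]"
    using u unfolding is_factor_def by blast
  define z where "z = morph h (map w [0..<a + length u])"
  have "a + length u \<le> length z"
    using length_morph_ge[where h = h, OF ne, of "map w [0..<a + length u]"] unfolding z_def by simp
  moreover have "u ! i = morph_inf h w (a + i)" if "i < length u" for i
    using arg_cong[OF a, of "\<lambda>v. v ! i"] that by simp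
  ultimately have "u = take (length u) (drop a z)"
    using morph_inf_nth[where h = h, OF ne, of _ w "a + length u"] unfolding z_def
    by (intro nth_equalityI) auto
  then have "take a z @ u @ drop (length u) (drop a z) = z"
    by (metis append_take_drop_id)
  then show thesis
    using that unfolding z_def by blast
qed

lemma morph_inf_repetition:
  assumes ne: "\<And>a. h a \<noteq> []" and bound: "\<And>a. length (h a) \<le> M"
    and q: "0 < q" and rep: "\<forall>i<I. w (k + i) = w (k + q + i)"
  obtains a Q where "0 < Q" "Q \<le> M * q" "\<forall>i<I. morph_inf h w (a + i) = morph_inf h w (a + Q + i)"
proof -
  define pre where "pre = map w [0..<k]"
  define mid where "mid = map w [k..<k + q]"
  define seg where "seg = map w [k..<k + I]"
  have seg: "seg = map w [k + q..<k + q + I]"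
    unfolding seg_def using rep by (intro nth_equalityI) (auto simp: add.assoc)
  have split1: "map w [0..<k + I] = pre @ seg"
    unfolding pre_def seg_def using upt_add_eq_append[of 0 k I] by simp
  have split2: "map w [0..<k + q + I] = pre @ mid @ seg"
    unfolding pre_def mid_def seg
    using upt_add_eq_append[of 0 "k + q" I] upt_add_eq_append[of 0 k q] by simp
  have "I \<le> length (morph h seg)"
    using length_morph_ge[where h = h, OF ne, of seg] unfolding seg_def by simp
  then have "morph_inf h w (length (morph h pre) + i) = morph h seg ! i"
    "morph_inf h w (length (morph h pre) + length (morph h mid) + i) = morph h seg ! i" if "i < I" for i
    using that morph_inf_nth[where h = h, OF ne, of "length (morph h pre) + i" w "k + I"]
      morph_inf_nth[where h = h, OF ne, of "length (morph h pre) + length (morph h mid) + i" w "k + q + I"]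
    unfolding split1 split2 by (simp_all add: nth_append)
  moreover have "0 < length (morph h mid)" "length (morph h mid) \<le> M * q"
    using length_morph_ge[where h = h, OF ne, of mid] length_morph_le[of h M mid, OF bound] q
    unfolding mid_def by (simp_all del: length_greater_0_conv)
  ultimately show thesis
    using that[of "length (morph h mid)" "length (morph h pre)"] by simp
qed

lemma periodic_nth_mod:
  fixes x :: "nat \<Rightarrow> 'a"
  assumes rep: "\<forall>i<n. x (a + i) = x (a + q + i)" and q: "0 < q"
  shows "i < q + n \<Longrightarrow> x (a + i) = x (a + i mod q)"
proof (induction i rule: less_induct)
  case (less i)
  show ?case
  proof (cases "i < q")
    case False
    then have "x (a + i) = x (a + (i - q))"
      using rep less.prems by (metis add.assoc add.commute le_add_diff_inverse less_diff_conv2 not_less)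
    also have "\<dots> = x (a + (i - q) mod q)"
      using less.IH[of "i - q"] less.prems q False by simp
    finally show ?thesis
      using False by (simp add: le_mod_geq)
  qed simp
qed

lemma Exp_ge_periodic:
  assumes "0 < q" "q \<le> length y" "\<And>i. i < length y \<Longrightarrow> y ! i = y ! (i mod q)"
  shows "ereal (real (length y) / real q) \<le> Exp y"
proof -
  have "take q y \<noteq> []"
    using assms(1,2) by (cases y) auto
  then have "is_power y (take q y) (of_nat (length y) / of_nat q)"
    unfolding is_power_def using assms by (simp add: of_rat_divide)
  then show ?thesis
    unfolding Exp_def by (intro Sup_upper) (force simp: of_rat_divide)
qed

lemma ACE_infinite:
  assumes Q: "0 < Q" and rep: "\<And>n. \<exists>a q. 0 < q \<and> q \<le> Q \<and> (\<forall>i<n. x (a + i) = x (a + q + i))"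
  shows "ACE x = \<infinity>"
proof -
  have bound: "ereal (real n / real Q) \<le> Sup (Exp ` Fact n x)" if "Q \<le> n" for n
  proof -
    obtain a q where q: "0 < q" "q \<le> Q" "\<forall>i<n. x (a + i) = x (a + q + i)"
      using rep by blast
    define y where "y = map x [a..<a + n]"
    have "y ! i = y ! (i mod q)" if "i < length y" for i
      using that q periodic_nth_mod[OF q(3) q(1), of i] \<open>Q \<le> n\<close> unfolding y_def
      by (simp add: order.strict_trans2[OF mod_less_divisor[OF q(1)]])
    moreover have "length y = n"
      unfolding y_def by simp
    ultimately have "ereal (real n / real q) \<le> Exp y"
      using Exp_ge_periodic[OF q(1), of y] q(2) \<open>Q \<le> n\<close> by simp
    moreover have "real n / real Q \<le> real n / real q"
      using q by (simp add: frac_le)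
    moreover have "Exp y \<le> Sup (Exp ` Fact n x)"
      unfolding y_def Fact_def by (intro Sup_upper) auto
    ultimately show ?thesis
      by (meson ereal_less_eq(3) order_trans)
  qed
  have "filterlim (\<lambda>n. real n / real Q) at_top sequentially"
    using filterlim_tendsto_pos_mult_at_top[OF tendsto_const[of "1 / real Q"] _ filterlim_real_sequentially] Q
    by simp
  then have "limsup (\<lambda>n. ereal (real n / real Q)) = \<infinity>"
    by (intro lim_imp_Limsup) (simp_all add: tendsto_PInfty_eq_at_top)
  moreover have "limsup (\<lambda>n. ereal (real n / real Q)) \<le> ACE x"
    unfolding ACE_def using bound by (intro Limsup_mono) (auto simp: eventually_sequentially)
  ultimately show ?thesis
    by (simp add: top.extremum_unique)
qed

section \<open>Parsings by a code with bounded delay\<close>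

locale code_with_delay =
  fixes h :: "'a::finite \<Rightarrow> 'b list" and m M :: nat
  assumes inj_morph: "inj (morph h)"
    and delay: "\<And>c d x y. c \<noteq> d \<Longrightarrow>
      length (lcp (morph h (c # x)) (morph h (d # y))) =
        min m (min (length (morph h (c # x))) (length (morph h (d # y))))"
    and letter_length_le: "\<And>a. length (h a) \<le> M"
begin

lemma nonerasing: "h a \<noteq> []"
  using inj_morph_nonerasing[OF inj_morph] .

lemma M_pos: "0 < M"
  using letter_length_le[of undefined] nonerasing[of undefined] by (cases "h undefined") auto

lemma length_morph_bounded: "length (morph h xs) \<le> M * length xs"
  using length_morph_le[OF letter_length_le] .

lemma length_morph_take_add:
  "length (morph h (take (j + k) \<zeta>)) \<le> length (morph h (take j \<zeta>)) + M * k"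
proof -
  have "length (morph h (take k (drop j \<zeta>))) \<le> M * k"
    by (rule order_trans[OF length_morph_bounded]) simp
  then show ?thesis
    by (simp add: take_add)
qed

lemma cut_near:
  "n \<le> length (morph h \<zeta>) \<Longrightarrow>
   \<exists>j. n \<le> length (morph h (take j \<zeta>)) \<and> length (morph h (take j \<zeta>)) < n + M"
proof (induction \<zeta> arbitrary: n)
  case Nil
  then show ?case
    using M_pos by simp
next
  case (Cons c \<zeta>)
  show ?case
  proof (cases "n \<le> length (h c)")
    case True
    then show ?thesis
      using M_pos letter_length_le[of c]
      by (cases "n = 0") (auto intro: exI[of _ 0] exI[of _ 1])
  next
    case False
    have "n - length (h c) \<le> length (morph h \<zeta>)"
      using Cons.prems by simp
    then obtain j where "n - length (h c) \<le> length (morph h (take j \<zeta>))"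
      "length (morph h (take j \<zeta>)) < n - length (h c) + M"
      using Cons.IH by blast
    then show ?thesis
      using False by (intro exI[of _ "Suc j"]) auto
  qed
qed

lemma lcp_morph_parallel:
  assumes "x \<parallel> y"
  shows "length (lcp (morph h x) (morph h y)) =
    min (length (morph h (lcp x y)) + m) (min (length (morph h x)) (length (morph h y)))"
proof -
  obtain p c x' d y' where cd: "c \<noteq> d" and xy: "x = p @ c # x'" "y = p @ d # y'"
    using parallel_decomp[OF assms] by blast
  then have "lcp x y = p"
    using lcp_append_same[of p "c # x'" "d # y'"] by simp
  then show ?thesis
    using delay[OF cd, of x' y'] lcp_append_same[of "morph h p"] xy
    by (simp del: morph_Cons)
qed

text \<open>Otherwise \<open>\<alpha>\<close> and \<open>\<alpha>'\<close> first differ in some letter and their images diverge exactly \<open>m\<close>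
  symbols after the corresponding cut; read through \<open>s @ morph h \<beta>\<close> and \<open>s @ morph h \<beta>'\<close>, the same
  divergence occurs \<open>m\<close> symbols after a cut of \<open>\<beta>\<close>, giving a common cut before \<open>L\<close>.\<close>

lemma parsings_synchronize:
  assumes agree: "take L (morph h \<alpha>) = take L (s @ morph h \<beta>)"
    and agree': "take L (morph h \<alpha>') = take L (s @ morph h \<beta>')"
    and long: "L \<le> length (morph h \<alpha>)" "L \<le> length (morph h \<alpha>')"
    and cuts_apart: "\<And>x y. prefix x \<alpha> \<Longrightarrow> prefix y \<beta> \<Longrightarrow>
      length (morph h x) = length s + length (morph h y) \<Longrightarrow> L \<le> length (morph h x)"
    and \<gamma>: "prefix \<gamma> \<alpha>" "length (morph h \<gamma>) + m < L"
  shows "prefix \<gamma> \<alpha>'"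
proof (rule ccontr)
  assume not_prefix: "\<not> prefix \<gamma> \<alpha>'"
  have "\<not> prefix \<alpha>' \<gamma>"
    using long(2) \<gamma>(2) length_morph_prefix[of \<alpha>' \<gamma> h] by linarith
  define p where "p = lcp \<alpha> \<alpha>'"
  have par: "\<alpha> \<parallel> \<alpha>'" and "prefix p \<gamma>"
    using parallel_if_prefix_not_prefix[OF \<gamma>(1) not_prefix \<open>\<not> prefix \<alpha>' \<gamma>\<close>] unfolding p_def by auto
  then have p_short: "length (morph h p) \<le> length (morph h \<gamma>)"
    by (intro length_morph_prefix)
  define K where "K = length (morph h p) + m"
  have "length (lcp (morph h \<alpha>) (morph h \<alpha>')) = K"
    using lcp_morph_parallel[OF par] long \<gamma>(2) p_short unfolding K_def p_def by linarith
  then have "length (lcp (s @ morph h \<beta>) (s @ morph h \<beta>')) = K"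
    using length_lcp_take_cong[OF agree agree'] \<gamma>(2) p_short unfolding K_def by linarith
  then have lcp_\<beta>: "length s + length (lcp (morph h \<beta>) (morph h \<beta>')) = K"
    by (simp add: lcp_append_same)
  have long_\<beta>: "L \<le> length s + length (morph h \<beta>)" "L \<le> length s + length (morph h \<beta>')"
    using arg_cong[OF agree, of length] arg_cong[OF agree', of length] long by auto
  have "\<beta> \<parallel> \<beta>'"
  proof (rule ccontr)
    assume "\<not> \<beta> \<parallel> \<beta>'"
    then show False
      using lcp_\<beta> lcp_morph_comparable[of \<beta> \<beta>' h] long_\<beta> \<gamma>(2) p_short
      unfolding K_def by linarith
  qed
  define q where "q = lcp \<beta> \<beta>'"
  have "length (morph h p) = length s + length (morph h q)"
    using lcp_\<beta> lcp_morph_parallel[OF \<open>\<beta> \<parallel> \<beta>'\<close>] long_\<beta> \<gamma>(2) p_short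
    unfolding K_def q_def by linarith
  then have "L \<le> length (morph h p)"
    using cuts_apart longest_common_prefix_prefix1 unfolding p_def q_def by blast
  then show False
    using \<gamma>(2) p_short by linarith
qed

lemma equal_states_synchronize:
  assumes F: "p1 @ u @ s1 = morph h \<zeta>" and G: "p2 @ u @ s2 = morph h \<eta>"
    and disjoint: "no_common_cut h \<zeta> (length p1) \<eta> (length p2) (length u)"
    and x: "x @ \<alpha> = \<zeta>" "length (morph h x) = length p1 + t"
    and x': "x' @ \<alpha>' = \<zeta>" "length (morph h x') = length p1 + t'"
    and state: "inside_letter h \<eta> (length p2 + t) (c, d)" "inside_letter h \<eta> (length p2 + t') (c, d)"
    and t: "t \<le> t'" "t' \<le> length u"
    and \<gamma>: "prefix \<gamma> \<alpha>" "length (morph h \<gamma>) + m < length u - t'"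
  shows "prefix \<gamma> \<alpha>'"
proof -
  obtain y z where y: "\<eta> = y @ c # z" "length (morph h y) + d = length p2 + t"
    and d: "d \<le> length (h c)"
    using state(1) unfolding inside_letter_def by auto
  obtain y' z' where y': "\<eta> = y' @ c # z'" "length (morph h y') + d = length p2 + t'"
    using state(2) unfolding inside_letter_def by auto
  define L where "L = length u - t'"
  define s where "s = drop d (h c)"
  have \<alpha>: "morph h \<alpha> = drop t u @ s1" and \<alpha>': "morph h \<alpha>' = drop t' u @ s1"
    using occurrence_suffix_at_cut[OF F] x x' t by auto
  have z: "drop t u @ s2 = s @ morph h z"
    using occurrence_suffix_in_letter[OF G y] d t unfolding s_def by simp
  have z': "drop t' u @ s2 = s @ morph h z'"
    using occurrence_suffix_in_letter[OF G y'] d t unfolding s_def by simp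
  show ?thesis
  proof (rule parsings_synchronize[where L = L and s = s and \<beta> = z and \<beta>' = z'])
    have take_t: "take L (drop t u @ v) = take L (drop t u)" for v
      using t unfolding L_def by simp
    have take_t': "take L (drop t' u @ v) = take L (drop t' u)" for v
      unfolding L_def by simp
    show "take L (morph h \<alpha>) = take L (s @ morph h z)"
      by (simp only: \<alpha> take_t flip: z)
    show "take L (morph h \<alpha>') = take L (s @ morph h z')"
      by (simp only: \<alpha>' take_t' flip: z')
    show "L \<le> length (morph h \<alpha>)" "L \<le> length (morph h \<alpha>')"
      using \<alpha> \<alpha>' t unfolding L_def by auto
    show "L \<le> length (morph h x1)"
      if x1: "prefix x1 \<alpha>" and y1: "prefix y1 z"
        and common: "length (morph h x1) = length s + length (morph h y1)" for x1 y1
    proof (rule ccontr)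
      assume "\<not> L \<le> length (morph h x1)"
      then have "t + length (morph h x1) \<le> length u"
        unfolding L_def using t by linarith
      moreover have "length p1 + (t + length (morph h x1)) \<in> cuts h \<zeta>"
        using x x1 by (intro in_cutsI[of "x @ x1"]) auto
      moreover have "length p2 + (t + length (morph h x1)) \<in> cuts h \<eta>"
        using y y1 d common unfolding s_def by (intro in_cutsI[of "y @ c # y1"]) auto
      ultimately show False
        using disjoint unfolding no_common_cut_def by blast
    qed
  qed (use \<gamma> in \<open>simp_all add: L_def\<close>)
qed

lemma nonsync_split:
  assumes F: "p1 @ u @ s1 = morph h \<zeta>" and nonsync: "\<not> sync_word (range h) u"
    and long: "2 * M \<le> length u"
  obtains p1' u' s1' p2' s2' \<eta> where "p1' @ u' @ s1' = morph h \<zeta>" "p2' @ u' @ s2' = morph h \<eta>"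
    "no_common_cut h \<zeta> (length p1') \<eta> (length p2') (length u')" "length u \<le> 2 * (length u' + M)"
proof -
  have "length p1 + length u div 2 \<le> length (morph h \<zeta>)"
    by (simp flip: F)
  then obtain j where j: "length p1 + length u div 2 \<le> length (morph h (take j \<zeta>))"
    "length (morph h (take j \<zeta>)) < length p1 + length u div 2 + M"
    using cut_near by blast
  define c where "c = length (morph h (take j \<zeta>)) - length p1"
  have c: "length p1 + c \<in> cuts h \<zeta>" "length u div 2 \<le> c" "c < length u div 2 + M"
    using j by (auto simp: c_def intro: in_cutsI take_is_prefix)
  then have "c \<le> length u"
    using long by linarith
  obtain p s \<eta> where G: "p @ u @ s = morph h \<eta>" and c_not_cut: "length p + c \<notin> cuts h \<eta>"
    using not_sync_word_occurrence[OF nonsync \<open>c \<le> length u\<close>] .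
  show thesis
  proof (cases "no_common_cut h \<zeta> (length p1) \<eta> (length p) c")
    case True
    show thesis
    proof (rule that[of p1 "take c u" "drop c u @ s1" p "drop c u @ s"])
      show "p1 @ take c u @ drop c u @ s1 = morph h \<zeta>" "p @ take c u @ drop c u @ s = morph h \<eta>"
        using F G by (metis append_take_drop_id append.assoc)+
      show "no_common_cut h \<zeta> (length p1) \<eta> (length p) (length (take c u))"
        using True \<open>c \<le> length u\<close> by simp
      show "length u \<le> 2 * (length (take c u) + M)"
        using c(2) \<open>c \<le> length u\<close> M_pos by simp
    qed
  next
    case False
    then obtain a where a: "a \<le> c" "length p1 + a \<in> cuts h \<zeta>" "length p + a \<in> cuts h \<eta>"
      unfolding no_common_cut_def by blast
    show thesis
    proof (rule that[of "p1 @ take c u" "drop c u" s1 "p @ take c u" s])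
      show "(p1 @ take c u) @ drop c u @ s1 = morph h \<zeta>" "(p @ take c u) @ drop c u @ s = morph h \<eta>"
        using F G by (metis append_take_drop_id append.assoc)+
      show "no_common_cut h \<zeta> (length (p1 @ take c u)) \<eta> (length (p @ take c u)) (length (drop c u))"
        using no_common_cut_after[OF inj_morph F G a c(1) c_not_cut \<open>c \<le> length u\<close>] \<open>c \<le> length u\<close>
        by simp
      show "length u \<le> 2 * (length (drop c u) + M)"
        using c(3) by simp
    qed
  qed
qed

lemma cut_window:
  assumes F: "p1 @ u @ s1 = morph h \<zeta>" and long: "M * (K + 1) + r < length u"
  obtains j0 where "\<And>j. j0 \<le> j \<Longrightarrow> j \<le> j0 + K \<Longrightarrow>
    length p1 \<le> length (morph h (take j \<zeta>)) \<and> length (morph h (take j \<zeta>)) + r < length p1 + length u"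
proof -
  have "length p1 \<le> length (morph h \<zeta>)"
    by (simp flip: F)
  then obtain j0 where j0: "length p1 \<le> length (morph h (take j0 \<zeta>))"
    "length (morph h (take j0 \<zeta>)) < length p1 + M"
    using cut_near by blast
  have "length p1 \<le> length (morph h (take j \<zeta>)) \<and> length (morph h (take j \<zeta>)) + r < length p1 + length u"
    if "j0 \<le> j" "j \<le> j0 + K" for j
  proof -
    have "length (morph h (take j0 \<zeta>)) \<le> length (morph h (take j \<zeta>))"
      using that length_morph_take_mono[of j0 j h \<zeta>] by simp
    moreover have "length (morph h (take j \<zeta>)) \<le> length (morph h (take j0 \<zeta>)) + M * (j - j0)"
      using that length_morph_take_add[of j0 "j - j0" \<zeta>] by simp
    moreover have "M * (j - j0) \<le> M * K"
      using that by (intro mult_le_mono2) (auto simp: le_diff_conv)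
    moreover have "M * (K + 1) = M * K + M"
      by simp
    ultimately show ?thesis
      using j0 long by linarith
  qed
  then show thesis
    by (rule that)
qed

text \<open>The state of a cut of \<open>\<zeta>\<close> is the letter of \<open>\<eta>\<close> it falls into together with the offset inside
  that letter; there are fewer than \<open>CARD('a) * M\<close> states.\<close>

lemma cuts_same_state:
  assumes G: "p2 @ u @ s2 = morph h \<eta>"
    and disjoint: "no_common_cut h \<zeta> (length p1) \<eta> (length p2) (length u)"
    and cut: "\<And>j. j0 \<le> j \<Longrightarrow> j \<le> j0 + CARD('a) * M \<Longrightarrow> length p1 + t j \<in> cuts h \<zeta> \<and> t j < length u"
  obtains j j' c d where "j0 \<le> j" "j < j'" "j' \<le> j0 + CARD('a) * M"
    "inside_letter h \<eta> (length p2 + t j) (c, d)" "inside_letter h \<eta> (length p2 + t j') (c, d)"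
proof -
  let ?N = "CARD('a) * M"
  define st where "st j = (SOME cd. inside_letter h \<eta> (length p2 + t j) cd)" for j
  have st: "inside_letter h \<eta> (length p2 + t j) (st j)" if "j \<in> {j0..j0 + ?N}" for j
  proof -
    have "\<exists>cd. inside_letter h \<eta> (length p2 + t j) cd"
      using no_common_cut_inside_letter[OF G disjoint] cut that by auto
    then show ?thesis
      unfolding st_def by (rule someI_ex)
  qed
  have "st j \<in> UNIV \<times> {..<M}" if "j \<in> {j0..j0 + ?N}" for j
    using st[OF that] letter_length_le[of "fst (st j)"] unfolding inside_letter_def
    by (cases "st j") auto
  then have "st ` {j0..j0 + ?N} \<subseteq> UNIV \<times> {..<M}"
    by blast
  moreover have "finite (UNIV \<times> {..<M} :: ('a \<times> nat) set)"
    by simp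
  moreover have "card (UNIV \<times> {..<M} :: ('a \<times> nat) set) = ?N"
    by (simp add: card_cartesian_product)
  ultimately obtain j j' where jj: "j0 \<le> j" "j < j'" "j' \<le> j0 + ?N" "st j = st j'"
    using pigeonhole_window[of "UNIV \<times> {..<M}" st j0] by metis
  then show thesis
    using that[of j j' "fst (st j)" "snd (st j)"] st[of j] st[of j'] by simp
qed

lemma disjoint_parsings_periodic:
  assumes F: "p1 @ u @ s1 = morph h \<zeta>" and G: "p2 @ u @ s2 = morph h \<eta>"
    and disjoint: "no_common_cut h \<zeta> (length p1) \<eta> (length p2) (length u)"
    and long: "M * (CARD('a) * M + 1) + M * I + m < length u"
  obtains k q where "0 < q" "q \<le> CARD('a) * M" "k + q + I \<le> length \<zeta>"
    "take I (drop k \<zeta>) = take I (drop (k + q) \<zeta>)"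
proof -
  let ?N = "CARD('a) * M"
  obtain j0 where window: "\<And>j. j0 \<le> j \<Longrightarrow> j \<le> j0 + ?N \<Longrightarrow> length p1 \<le> length (morph h (take j \<zeta>)) \<and>
      length (morph h (take j \<zeta>)) + (M * I + m) < length p1 + length u"
    using cut_window[OF F long[unfolded add.assoc]] by blast
  define t where "t j = length (morph h (take j \<zeta>)) - length p1" for j
  have cut_t: "length (morph h (take j \<zeta>)) = length p1 + t j" and room: "t j + M * I + m < length u"
    if "j0 \<le> j" "j \<le> j0 + ?N" for j
    using window[OF that] unfolding t_def by auto
  have "length p1 + t j \<in> cuts h \<zeta> \<and> t j < length u" if "j0 \<le> j" "j \<le> j0 + ?N" for j
    using in_cutsI[OF take_is_prefix[of j \<zeta>], where h = h] cut_t[OF that] room[OF that] by simp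
  then obtain j j' c d where jj: "j0 \<le> j" "j < j'" "j' \<le> j0 + ?N"
    and state: "inside_letter h \<eta> (length p2 + t j) (c, d)" "inside_letter h \<eta> (length p2 + t j') (c, d)"
    using cuts_same_state[OF G disjoint] by blast
  have j: "j0 \<le> j" "j \<le> j0 + ?N" and j': "j0 \<le> j'" "j' \<le> j0 + ?N"
    using jj by simp_all
  have "t j \<le> t j'"
    using length_morph_take_mono[of j j' h \<zeta>] jj(2) unfolding t_def by simp
  have "length (morph h (take I (drop j \<zeta>))) \<le> M * I"
    by (rule order_trans[OF length_morph_bounded]) simp
  then have "prefix (take I (drop j \<zeta>)) (drop j' \<zeta>)"
    using equal_states_synchronize[OF F G disjoint append_take_drop_id cut_t[OF j] append_take_drop_id
        cut_t[OF j'] state] \<open>t j \<le> t j'\<close> room[OF j']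
    by (simp add: take_is_prefix)
  moreover have "I < length (drop j' \<zeta>)"
  proof -
    have "length u - t j' \<le> length (morph h (drop j' \<zeta>))"
      using occurrence_suffix_at_cut[OF F append_take_drop_id cut_t[OF j']] room[OF j'] by simp
    then have "M * I < M * length (drop j' \<zeta>)"
      using room[OF j'] length_morph_bounded[of "drop j' \<zeta>"] by linarith
    then show ?thesis
      by simp
  qed
  moreover have "length (take I (drop j \<zeta>)) = I"
    using calculation(2) jj(2) by simp
  ultimately have "take I (drop j \<zeta>) = take I (drop j' \<zeta>)"
    by (metis prefixE append_eq_conv_conj)
  then show thesis
    using that[of "j' - j" j] jj \<open>I < length (drop j' \<zeta>)\<close> by simp
qed

lemma nonsync_factor_periodic:
  assumes factor: "is_factor u (morph_inf h w)" and nonsync: "\<not> sync_word (range h) u"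
    and long: "2 * (M * (CARD('a) * M + 1) + M * I + m + M) < length u"
  obtains k q where "0 < q" "q \<le> CARD('a) * M" "\<forall>i<I. w (k + i) = w (k + q + i)"
proof -
  obtain n p1 s1 where F: "p1 @ u @ s1 = morph h (map w [0..<n])"
    using factor_in_prefix_image[where h = h, OF nonerasing factor] .
  define B where "B = M * (CARD('a) * M + 1) + M * I + m"
  have "2 * M \<le> length u"
    using long unfolding B_def[symmetric] by (simp add: distrib_left)
  then obtain p1' u' s1' p2' s2' \<eta> where F': "p1' @ u' @ s1' = morph h (map w [0..<n])"
    and G: "p2' @ u' @ s2' = morph h \<eta>"
    and disjoint: "no_common_cut h (map w [0..<n]) (length p1') \<eta> (length p2') (length u')"
    and "length u \<le> 2 * (length u' + M)"
    by (rule nonsync_split[OF F nonsync])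
  from this(4) have "B < length u'"
    using long unfolding B_def[symmetric] by (simp add: distrib_left)
  then have "M * (CARD('a) * M + 1) + M * I + m < length u'"
    unfolding B_def .
  then obtain k q where q: "0 < q" "q \<le> CARD('a) * M" "k + q + I \<le> length (map w [0..<n])"
    and rep: "take I (drop k (map w [0..<n])) = take I (drop (k + q) (map w [0..<n]))"
    by (rule disjoint_parsings_periodic[OF F' G disjoint])
  have "w (k + i) = w (k + q + i)" if "i < I" for i
    using arg_cong[OF rep, of "\<lambda>v. v ! i"] that q(3) by (simp add: add.assoc)
  then show thesis
    using that q(1,2) by blast
qed


lemma ACE_infinite_of_nonsync_factors:
  assumes factor: "\<And>i. is_factor (f i) (morph_inf h w)" and nonsync: "\<And>i. \<not> sync_word (range h) (f i)"
    and unbounded: "filterlim (\<lambda>i. length (f i)) at_top sequentially"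
  shows "ACE (morph_inf h w) = \<infinity>" "ACE w = \<infinity>"
proof -
  have periodic: "\<exists>k q. 0 < q \<and> q \<le> CARD('a) * M \<and> (\<forall>i<I. w (k + i) = w (k + q + i))" for I
  proof -
    have "eventually (\<lambda>i. Suc (2 * (M * (CARD('a) * M + 1) + M * I + m + M)) \<le> length (f i)) sequentially"
      using unbounded unfolding filterlim_at_top by blast
    then obtain i where "2 * (M * (CARD('a) * M + 1) + M * I + m + M) < length (f i)"
      unfolding eventually_sequentially Suc_le_eq by blast
    from nonsync_factor_periodic[OF factor nonsync this] show ?thesis
      by blast
  qed
  then show "ACE w = \<infinity>"
    by (intro ACE_infinite[of "CARD('a) * M"]) (use M_pos in auto)
  show "ACE (morph_inf h w) = \<infinity>"
  proof (rule ACE_infinite[of "M * (CARD('a) * M)"])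
    fix I
    obtain k q where q: "0 < q" "q \<le> CARD('a) * M" and rep: "\<forall>i<I. w (k + i) = w (k + q + i)"
      using periodic by blast
    obtain a Q where "0 < Q" "Q \<le> M * q" "\<forall>i<I. morph_inf h w (a + i) = morph_inf h w (a + Q + i)"
      using morph_inf_repetition[where h = h, OF nonerasing letter_length_le q(1) rep] .
    then show "\<exists>a Q. 0 < Q \<and> Q \<le> M * (CARD('a) * M) \<and>
        (\<forall>i<I. morph_inf h w (a + i) = morph_inf h w (a + Q + i))"
      using q(2) by (meson order_trans mult_le_mono2)
  qed (use M_pos in simp)
qed

end

lemma binary_code_with_delay:
  fixes h :: "'a::finite \<Rightarrow> 'b list"
  assumes "card (UNIV :: 'a set) = 2" and "inj (morph h)"
  obtains m where "code_with_delay h m (Max (range (\<lambda>a. length (h a))))"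
proof -
  obtain m where "\<And>c d x y. c \<noteq> d \<Longrightarrow> length (lcp (morph h (c # x)) (morph h (d # y))) =
      min m (min (length (morph h (c # x))) (length (morph h (d # y))))"
    using binary_code_delay[OF assms] by blast
  then have "code_with_delay h m (Max (range (\<lambda>a. length (h a))))"
    using assms(2) by unfold_locales auto
  then show thesis
    by (rule that)
qed

theorem lemma29:
  fixes h :: "'a::finite \<Rightarrow> 'b::finite list" and w :: "nat \<Rightarrow> 'a"
  assumes "card (UNIV :: 'a set) = 2"
    and "inj (morph h)"
    and "\<exists>f :: nat \<Rightarrow> 'b list.
           (\<forall>i. is_factor (f i) (morph_inf h w) \<and> \<not> sync_word (range h) (f i)) \<and>
           filterlim (\<lambda>i. length (f i)) at_top sequentially"
  shows "ACE (morph_inf h w) = \<infinity> \<and> ACE w = \<infinity>"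
proof -
  obtain f :: "nat \<Rightarrow> 'b list" where factor: "\<And>i. is_factor (f i) (morph_inf h w)"
    and nonsync: "\<And>i. \<not> sync_word (range h) (f i)"
    and unbounded: "filterlim (\<lambda>i. length (f i)) at_top sequentially"
    using assms(3) by blast
  obtain m where "code_with_delay h m (Max (range (\<lambda>a. length (h a))))"
    using binary_code_with_delay[OF assms(1,2)] .
  then interpret code_with_delay h m "Max (range (\<lambda>a. length (h a)))" .
  show ?thesis
    using ACE_infinite_of_nonsync_factors[OF factor nonsync unbounded] by simp
qed

end
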